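(* Let $\Gamma_3^*\subseteq\mathbb{R}^7$ be the set of entropy vectors of triples of discrete random variables, and let $\Lambda_3\subseteq\Gamma_3^*$ be the set of quasi-uniform entropy vectors. Let $\mathbf{e}_1=[1,0,0,1,1,0,1]^\intercal$, $\mathbf{e}_2=[0,1,0,1,0,1,1]^\intercal$, $\mathbf{e}_3=[0,0,1,0,1,1,1]^\intercal$, $\mathbf{e}_{123'}=[1,1,1,2,2,2,2]^\intercal$, and let $\Theta=\mathrm{cone}(\mathbf{e}_1,\mathbf{e}_2,\mathbf{e}_3,\mathbf{e}_{123'})=\{\lambda_1\mathbf{e}_1+\lambda_2\mathbf{e}_2+\lambda_3\mathbf{e}_3+\lambda_{123'}\mathbf{e}_{123'}:\lambda_1,\lambda_2,\lambda_3,\lambda_{123'}\ge 0\}$. Let $\Theta^{\mathrm{in}}$ be the set of all vectors $\lambda_1\mathbf{e}_1+\lambda_2\mathbf{e}_2+\lambda_3\mathbf{e}_3+\lambda_{123'}\mathbf{e}_{123'}$ with $\lambda_1,\lambda_2,\lambda_3\ge 0$ and $\lambda_{123'}=\log m$ for some $m\in\mathbb{N}$. Then there exists a quasi-uniform entropy vector $\mathbf{h}\in\Lambda_3$ lying in the relative interior of $\Theta$ (i.e., in $\Theta$ but in no proper face of $\Theta$) such that $\mathbf{h}\notin\Theta^{\mathrm{in}}$.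
   Context: All logarithms are base 2 and entropies are in bits. For a discrete random vector $(X_1,X_2,X_3)$, its entropy vector is $\mathbf{h}=[h_1,h_2,h_3,h_{12},h_{13},h_{23},h_{123}]^\intercal\in\mathbb{R}^7$, where $h_\alpha$ is the Shannon entropy of $(X_i)_{i\in\alpha}$. A discrete random variable $X$ is quasi-uniform if there is a constant $p\in(0,1]$ with $\Pr\{X=x\}\in\{p,0\}$ for all $x$; a random vector $(X_1,X_2,X_3)$ is quasi-uniform if $(X_i)_{i\in\alpha}$ is quasi-uniform for every nonempty $\alpha\subseteq\{1,2,3\}$. A quasi-uniform entropy vector is the entropy vector of a quasi-uniform random vector. $\Theta$ is a face of the polymatroid cone $\Gamma_3$ (the set of $\mathbf{h}$ satisfying the Shannon elemental inequalities). *)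

theory Defs
  imports "HOL-Analysis.Analysis" "HOL-Probability.Probability"
begin

text \<open>A triple of discrete random variables is represented by its joint distribution,
  a pmf on nat x nat x nat (the values of a discrete random variable form a countable
  set, which we code into nat).\<close>

type_synonym triple_dist = "(nat \<times> nat \<times> nat) pmf"

definition entropy_pmf :: "'a pmf \<Rightarrow> real" where
  "entropy_pmf q = infsum (\<lambda>x. - pmf q x * log 2 (pmf q x)) (set_pmf q)"

definition quasi_uniform_pmf :: "'a pmf \<Rightarrow> bool" where
  "quasi_uniform_pmf q \<longleftrightarrow> (\<exists>p. 0 < p \<and> p \<le> 1 \<and> (\<forall>x. pmf q x \<in> {p, 0}))"

definition m1 :: "triple_dist \<Rightarrow> nat pmf" where "m1 P = map_pmf (\<lambda>(a,b,c). a) P"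
definition m2 :: "triple_dist \<Rightarrow> nat pmf" where "m2 P = map_pmf (\<lambda>(a,b,c). b) P"
definition m3 :: "triple_dist \<Rightarrow> nat pmf" where "m3 P = map_pmf (\<lambda>(a,b,c). c) P"
definition m12 :: "triple_dist \<Rightarrow> (nat \<times> nat) pmf" where "m12 P = map_pmf (\<lambda>(a,b,c). (a,b)) P"
definition m13 :: "triple_dist \<Rightarrow> (nat \<times> nat) pmf" where "m13 P = map_pmf (\<lambda>(a,b,c). (a,c)) P"
definition m23 :: "triple_dist \<Rightarrow> (nat \<times> nat) pmf" where "m23 P = map_pmf (\<lambda>(a,b,c). (b,c)) P"

definition entropy_vector :: "triple_dist \<Rightarrow> real^7" where
  "entropy_vector P = vector [entropy_pmf (m1 P), entropy_pmf (m2 P), entropy_pmf (m3 P),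
     entropy_pmf (m12 P), entropy_pmf (m13 P), entropy_pmf (m23 P), entropy_pmf P]"

definition quasi_uniform_triple :: "triple_dist \<Rightarrow> bool" where
  "quasi_uniform_triple P \<longleftrightarrow>
     quasi_uniform_pmf (m1 P) \<and> quasi_uniform_pmf (m2 P) \<and> quasi_uniform_pmf (m3 P) \<and>
     quasi_uniform_pmf (m12 P) \<and> quasi_uniform_pmf (m13 P) \<and> quasi_uniform_pmf (m23 P) \<and>
     quasi_uniform_pmf P"

definition Gamma3_star :: "(real^7) set" where
  "Gamma3_star = {entropy_vector P | P. True}"

definition Lambda3 :: "(real^7) set" where
  "Lambda3 = {entropy_vector P | P. quasi_uniform_triple P}"

definition e1 :: "real^7" where "e1 = vector [1,0,0,1,1,0,1]"
definition e2 :: "real^7" where "e2 = vector [0,1,0,1,0,1,1]"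
definition e3 :: "real^7" where "e3 = vector [0,0,1,0,1,1,1]"
definition e123' :: "real^7" where "e123' = vector [1,1,1,2,2,2,2]"

definition Theta :: "(real^7) set" where
  "Theta = {l1 *\<^sub>R e1 + l2 *\<^sub>R e2 + l3 *\<^sub>R e3 + l4 *\<^sub>R e123' | l1 l2 l3 l4.
              l1 \<ge> 0 \<and> l2 \<ge> 0 \<and> l3 \<ge> 0 \<and> l4 \<ge> 0}"

definition Theta_in :: "(real^7) set" where
  "Theta_in = {l1 *\<^sub>R e1 + l2 *\<^sub>R e2 + l3 *\<^sub>R e3 + log 2 (real m) *\<^sub>R e123' | l1 l2 l3 m.
              l1 \<ge> 0 \<and> l2 \<ge> 0 \<and> l3 \<ge> 0 \<and> m \<ge> 1}"

end

theory Submission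
  imports Defs
begin

text \<open>Let X1, X2 be independent and uniform on the residues mod 3, and let X3 be uniform
  on the two residues different from X1 + X2.  Every marginal is uniform, on 3 values for
  single variables, on 9 for pairs and on 18 for the triple, so the distribution is
  quasi-uniform with entropy vector e1 + e2 + e3 + (log 3 - 1) e123'.  All four coefficients
  are positive, so this vector lies in the relative interior of the cone Theta and hence in
  none of its proper faces.  On the other hand, the e123' coefficient of a point h of Theta is
  h1 + h23 - h123, here log 3 - 1 = log (3/2), which is not the logarithm of an integer.\<close>

lemma entropy_pmf_of_set:
  assumes "finite A" "A \<noteq> {}"
  shows "entropy_pmf (pmf_of_set A) = log 2 (card A)"
proof -
  have "card A > 0" using assms by (simp add: card_gt_0_iff)
  have "entropy_pmf (pmf_of_set A) = (\<Sum>x\<in>A. - (1 / card A) * log 2 (1 / card A))"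
    unfolding entropy_pmf_def using assms by (simp add: infsum_finite)
  also have "\<dots> = log 2 (card A)"
    using \<open>card A > 0\<close> by (simp add: log_divide)
  finally show ?thesis .
qed

lemma quasi_uniform_pmf_of_set:
  assumes "finite A" "A \<noteq> {}"
  shows "quasi_uniform_pmf (pmf_of_set A)"
  unfolding quasi_uniform_pmf_def
proof (intro exI[of _ "1 / card A"] conjI allI)
  have "card A > 0" using assms by (simp add: card_gt_0_iff)
  then show "0 < 1 / real (card A)" "1 / real (card A) \<le> 1" by simp_all
  show "pmf (pmf_of_set A) x \<in> {1 / card A, 0}" for x
    using assms by (auto simp: indicator_def)
qed

lemma card_eq_mult_card_image_if_fibres:
  assumes "finite A" "\<forall>y\<in>f ` A. card (A \<inter> f -` {y}) = k"
  shows "card A = k * card (f ` A)"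
proof -
  have "A = (\<Union>y\<in>f ` A. A \<inter> f -` {y})" by blast
  then have "card A = card (\<Union>y\<in>f ` A. A \<inter> f -` {y})" by simp
  also have "\<dots> = (\<Sum>y\<in>f ` A. card (A \<inter> f -` {y}))"
    using assms(1) by (intro card_UN_disjoint) auto
  also have "\<dots> = (\<Sum>y\<in>f ` A. k)" using assms(2) by (intro sum.cong) auto
  also have "\<dots> = k * card (f ` A)" by simp
  finally show ?thesis .
qed

lemma map_pmf_of_set_uniform_fibres:
  assumes "finite A" "A \<noteq> {}" and image: "f ` A = B"
    and fibres: "\<forall>y\<in>B. card (A \<inter> f -` {y}) = k"
  shows "map_pmf f (pmf_of_set A) = pmf_of_set B"
proof (rule pmf_eqI)
  fix y
  have B: "finite B" "B \<noteq> {}" using assms(1,2) image by auto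
  have card_A: "card A = k * card B"
    using card_eq_mult_card_image_if_fibres[of A f k] assms by simp
  have "pmf (map_pmf f (pmf_of_set A)) y = card (A \<inter> f -` {y}) / card A"
    using assms by (simp add: pmf_map measure_pmf_of_set)
  also have "\<dots> = pmf (pmf_of_set B) y"
  proof (cases "y \<in> B")
    case True
    then have "card (A \<inter> f -` {y}) = k" using fibres by blast
    moreover have "k > 0" using card_A assms(1,2) by (cases k) auto
    ultimately show ?thesis using True card_A B by (simp add: indicator_def)
  next
    case False
    then have "A \<inter> f -` {y} = {}" using image by auto
    then show ?thesis using False B by (simp add: indicator_def)
  qed
  finally show "pmf (map_pmf f (pmf_of_set A)) y = pmf (pmf_of_set B) y" .
qed

definition generated_cone :: "('i \<Rightarrow> 'a::real_vector) \<Rightarrow> 'i set \<Rightarrow> 'a set" where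
  "generated_cone g I = {\<Sum>i\<in>I. l i *\<^sub>R g i | l. \<forall>i\<in>I. 0 \<le> l i}"

lemma convex_generated_cone: "convex (generated_cone g I)"
  unfolding convex_def
proof (intro ballI allI impI)
  fix x y and u v :: real
  assume "x \<in> generated_cone g I" "y \<in> generated_cone g I" and uv: "0 \<le> u" "0 \<le> v" "u + v = 1"
  then obtain l m where x: "x = (\<Sum>i\<in>I. l i *\<^sub>R g i)" "\<forall>i\<in>I. 0 \<le> l i"
    and y: "y = (\<Sum>i\<in>I. m i *\<^sub>R g i)" "\<forall>i\<in>I. 0 \<le> m i"
    unfolding generated_cone_def by blast
  have "u *\<^sub>R x + v *\<^sub>R y = (\<Sum>i\<in>I. (u * l i + v * m i) *\<^sub>R g i)"
    by (simp add: x y scaleR_sum_right scaleR_add_left sum.distrib)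
  moreover have "\<forall>i\<in>I. 0 \<le> u * l i + v * m i" using x y uv by simp
  ultimately show "u *\<^sub>R x + v *\<^sub>R y \<in> generated_cone g I"
    unfolding generated_cone_def by (intro CollectI exI[of _ "\<lambda>i. u * l i + v * m i"]) simp
qed

lemma positive_combination_in_rel_interior_generated_cone:
  fixes g :: "'i \<Rightarrow> 'a::euclidean_space"
  assumes "finite I" and a: "\<forall>i\<in>I. 0 < a i"
  shows "(\<Sum>i\<in>I. a i *\<^sub>R g i) \<in> rel_interior (generated_cone g I)"
proof -
  let ?z = "\<Sum>i\<in>I. a i *\<^sub>R g i"
  have z: "?z \<in> generated_cone g I"
    using a unfolding generated_cone_def by (auto intro: less_imp_le)
  have "\<exists>e>1. (1 - e) *\<^sub>R x + e *\<^sub>R ?z \<in> generated_cone g I"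
    if x_in: "x \<in> generated_cone g I" for x
  proof -
    obtain b where x: "x = (\<Sum>i\<in>I. b i *\<^sub>R g i)" and b: "\<forall>i\<in>I. 0 \<le> b i"
      using x_in unfolding generated_cone_def by blast
    define s where "s = (\<Sum>i\<in>I. b i / a i)"
    define t where "t = 1 / (1 + s)"
    have "0 \<le> s" using a b unfolding s_def by (simp add: sum_nonneg less_imp_le)
    then have t: "0 < t" by (simp add: t_def)
    have "t * b i \<le> (1 + t) * a i" if "i \<in> I" for i
    proof -
      have "b i / a i \<le> s"
        unfolding s_def using assms b that by (intro member_le_sum) (auto simp: less_imp_le)
      then have "t * (b i / a i) \<le> t * (1 + s)"
        using t by (intro mult_left_mono) auto
      also have "\<dots> = 1"
        using \<open>0 \<le> s\<close> by (simp add: t_def)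
      finally have "t * (b i / a i) \<le> 1" .
      then have "t * b i \<le> a i" using a that by (simp add: field_simps)
      moreover have "0 \<le> t * a i" using a t that by (simp add: less_imp_le)
      ultimately show ?thesis unfolding distrib_right by linarith
    qed
    moreover have "(1 - (1 + t)) *\<^sub>R x + (1 + t) *\<^sub>R ?z = (\<Sum>i\<in>I. ((1 + t) * a i - t * b i) *\<^sub>R g i)"
      by (simp add: x scaleR_sum_right scaleR_diff_left sum_subtractf sum_negf)
    ultimately show ?thesis
      using t unfolding generated_cone_def
      by (intro exI[of _ "1 + t"] conjI CollectI exI[of _ "\<lambda>i. (1 + t) * a i - t * b i"]) auto
  qed
  then show ?thesis
    using convex_rel_interior_iff[OF convex_generated_cone] z by blast
qed

lemma Theta_eq_generated_cone: "Theta = generated_cone ((!) [e1, e2, e3, e123']) {..<4}"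
proof -
  have sum4: "(\<Sum>i<4. l i *\<^sub>R [e1, e2, e3, e123'] ! i)
      = l 0 *\<^sub>R e1 + l 1 *\<^sub>R e2 + l 2 *\<^sub>R e3 + l 3 *\<^sub>R e123'" for l :: "nat \<Rightarrow> real"
    by (simp add: eval_nat_numeral add.assoc)
  show ?thesis
    unfolding Theta_def generated_cone_def sum4
  proof (intro equalityI subsetI; elim CollectE exE conjE)
    fix x and l1 l2 l3 l4 :: real
    assume "x = l1 *\<^sub>R e1 + l2 *\<^sub>R e2 + l3 *\<^sub>R e3 + l4 *\<^sub>R e123'" "0 \<le> l1" "0 \<le> l2" "0 \<le> l3" "0 \<le> l4"
    then show "x \<in> {l 0 *\<^sub>R e1 + l 1 *\<^sub>R e2 + l 2 *\<^sub>R e3 + l 3 *\<^sub>R e123' | l :: nat \<Rightarrow> real. \<forall>i\<in>{..<4}. 0 \<le> l i}"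
      by (intro CollectI exI[of _ "(!) [l1, l2, l3, l4]"]) (simp add: eval_nat_numeral lessThan_Suc)
  next
    fix x l
    assume "x = l 0 *\<^sub>R e1 + l 1 *\<^sub>R e2 + l 2 *\<^sub>R e3 + l 3 *\<^sub>R e123'" "\<forall>i\<in>{..<4::nat}. 0 \<le> (l i :: real)"
    then show "x \<in> {l1 *\<^sub>R e1 + l2 *\<^sub>R e2 + l3 *\<^sub>R e3 + l4 *\<^sub>R e123' | l1 l2 l3 l4.
        0 \<le> l1 \<and> 0 \<le> l2 \<and> 0 \<le> l3 \<and> 0 \<le> l4}"
      by (simp add: lessThan_nat_numeral) blast
  qed
qed

lemma vector_7_add:
  "(vector [a1, a2, a3, a4, a5, a6, a7] :: 'a::semiring_1^7) + vector [b1, b2, b3, b4, b5, b6, b7]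
    = vector [a1 + b1, a2 + b2, a3 + b3, a4 + b4, a5 + b5, a6 + b6, a7 + b7]"
  unfolding vector_def vec_eq_iff by (simp add: fun_upd_def)

lemma vector_7_scaleR:
  "c *\<^sub>R (vector [a1, a2, a3, a4, a5, a6, a7] :: real^7)
    = vector [c * a1, c * a2, c * a3, c * a4, c * a5, c * a6, c * a7]"
  unfolding vector_def vec_eq_iff by (simp add: fun_upd_def)

lemma Theta_combination_e123'_coefficient:
  assumes "h = l1 *\<^sub>R e1 + l2 *\<^sub>R e2 + l3 *\<^sub>R e3 + l4 *\<^sub>R e123'"
  shows "h $ 1 + h $ 6 - h $ 7 = l4"
  unfolding assms e1_def e2_def e3_def e123'_def vector_7_add vector_7_scaleR
  by (simp add: vector_def)

lemma log2_nat_neq_log2_3_minus_1: "log 2 (real m) \<noteq> log 2 3 - 1"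
proof
  assume eq: "log 2 (real m) = log 2 3 - 1"
  have "0 < log 2 3 - 1" by simp
  with eq have "m > 0" by (cases m) (auto simp: log_def)
  with eq have "log 2 (2 * real m) = log 2 3" by (simp add: log_mult_pos)
  then have "2 * real m = 3"
    using inj_onD[OF log_inj, of 2 "2 * real m" 3] \<open>m > 0\<close> by simp
  then have "2 * m = 3" by linarith
  then show False by presburger
qed

text \<open>The triples (a, b, c) of residues mod 3 with c \<noteq> a + b (mod 3).\<close>

definition triples_avoiding_sum :: "(nat \<times> nat \<times> nat) set" where
  "triples_avoiding_sum =
     (\<lambda>(a, b, d). (a, b, (a + b + d) mod 3)) ` ({0, 1, 2} \<times> {0, 1, 2} \<times> {1, 2})"

lemma triples_avoiding_sum_explicit:
  "triples_avoiding_sum =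
     {(0,0,1), (0,0,2), (0,1,2), (0,1,0), (0,2,0), (0,2,1), (1,0,2), (1,0,0), (1,1,0),
      (1,1,1), (1,2,1), (1,2,2), (2,0,0), (2,0,1), (2,1,1), (2,1,2), (2,2,2), (2,2,0)}"
  unfolding triples_avoiding_sum_def by (simp add: insert_Times_insert numeral_2_eq_2)

definition uniform_avoiding_sum :: triple_dist where
  "uniform_avoiding_sum = pmf_of_set triples_avoiding_sum"

lemma triples_avoiding_sum_finite_nonempty:
  "finite triples_avoiding_sum" "triples_avoiding_sum \<noteq> {}"
  by (simp_all add: triples_avoiding_sum_explicit)

lemma single_marginals_uniform_avoiding_sum:
  "m1 uniform_avoiding_sum = pmf_of_set {0, 1, 2}"
  "m2 uniform_avoiding_sum = pmf_of_set {0, 1, 2}"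
  "m3 uniform_avoiding_sum = pmf_of_set {0, 1, 2}"
  unfolding m1_def m2_def m3_def uniform_avoiding_sum_def
  by (rule map_pmf_of_set_uniform_fibres[where k = 6]; auto simp: triples_avoiding_sum_explicit)+

lemma pair_marginals_uniform_avoiding_sum:
  "m12 uniform_avoiding_sum = pmf_of_set ({0, 1, 2} \<times> {0, 1, 2})"
  "m13 uniform_avoiding_sum = pmf_of_set ({0, 1, 2} \<times> {0, 1, 2})"
  "m23 uniform_avoiding_sum = pmf_of_set ({0, 1, 2} \<times> {0, 1, 2})"
  unfolding m12_def m13_def m23_def uniform_avoiding_sum_def
  by (rule map_pmf_of_set_uniform_fibres[where k = 2]; auto simp: triples_avoiding_sum_explicit)+

lemma quasi_uniform_triple_uniform_avoiding_sum: "quasi_uniform_triple uniform_avoiding_sum"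
  unfolding quasi_uniform_triple_def single_marginals_uniform_avoiding_sum
      pair_marginals_uniform_avoiding_sum
  using triples_avoiding_sum_finite_nonempty
  by (simp add: quasi_uniform_pmf_of_set uniform_avoiding_sum_def)

lemma entropy_vector_uniform_avoiding_sum:
  "entropy_vector uniform_avoiding_sum = e1 + e2 + e3 + (log 2 3 - 1) *\<^sub>R e123'"
proof -
  have "card triples_avoiding_sum = 18"
    by (simp add: triples_avoiding_sum_explicit)
  then have "entropy_vector uniform_avoiding_sum =
      vector [log 2 3, log 2 3, log 2 3, log 2 9, log 2 9, log 2 9, log 2 18]"
    unfolding entropy_vector_def single_marginals_uniform_avoiding_sum
      pair_marginals_uniform_avoiding_sum
    using triples_avoiding_sum_finite_nonempty
    by (simp add: entropy_pmf_of_set uniform_avoiding_sum_def)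
  moreover have log9: "log 2 9 = 2 * log 2 3"
    using log_mult_pos[of 3 3 2] by simp
  moreover have "log 2 18 = 1 + 2 * log 2 3"
    using log_mult_pos[of 2 9 2] log9 by simp
  ultimately show ?thesis
    unfolding e1_def e2_def e3_def e123'_def vector_7_add vector_7_scaleR
    by (simp add: algebra_simps)
qed

lemma entropy_vector_uniform_avoiding_sum_in_rel_interior_Theta:
  "entropy_vector uniform_avoiding_sum \<in> rel_interior Theta"
proof -
  have "entropy_vector uniform_avoiding_sum
      = (\<Sum>i<4. [1, 1, 1, log 2 3 - 1] ! i *\<^sub>R [e1, e2, e3, e123'] ! i)"
    by (simp add: entropy_vector_uniform_avoiding_sum eval_nat_numeral add.assoc)
  also have "\<dots> \<in> rel_interior (generated_cone ((!) [e1, e2, e3, e123']) {..<4})"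
    by (rule positive_combination_in_rel_interior_generated_cone)
      (simp_all add: lessThan_nat_numeral)
  finally show ?thesis
    unfolding Theta_eq_generated_cone .
qed

lemma entropy_vector_uniform_avoiding_sum_notin_Theta_in:
  "entropy_vector uniform_avoiding_sum \<notin> Theta_in"
proof
  let ?h = "entropy_vector uniform_avoiding_sum"
  assume "?h \<in> Theta_in"
  then obtain l1 l2 l3 and m :: nat
    where "?h = l1 *\<^sub>R e1 + l2 *\<^sub>R e2 + l3 *\<^sub>R e3 + log 2 (real m) *\<^sub>R e123'"
    unfolding Theta_in_def by blast
  then have "?h $ 1 + ?h $ 6 - ?h $ 7 = log 2 (real m)"
    by (rule Theta_combination_e123'_coefficient)
  moreover have "?h $ 1 + ?h $ 6 - ?h $ 7 = log 2 3 - 1"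
    using Theta_combination_e123'_coefficient[of ?h 1 1 1]
    by (simp add: entropy_vector_uniform_avoiding_sum)
  ultimately show False
    using log2_nat_neq_log2_3_minus_1[of m] by argo
qed

theorem theorem4:
  shows "\<exists>h \<in> Lambda3. h \<in> Theta \<and> (\<forall>F. F face_of Theta \<and> F \<noteq> Theta \<longrightarrow> h \<notin> F)
            \<and> h \<notin> Theta_in"
proof (intro bexI conjI allI impI)
  let ?h = "entropy_vector uniform_avoiding_sum"
  show "?h \<in> Lambda3"
    unfolding Lambda3_def using quasi_uniform_triple_uniform_avoiding_sum by blast
  show "?h \<in> Theta"
    using entropy_vector_uniform_avoiding_sum_in_rel_interior_Theta rel_interior_subset by blast
  show "?h \<notin> F" if "F face_of Theta \<and> F \<noteq> Theta" for F
    using that face_of_disjoint_rel_interior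
      entropy_vector_uniform_avoiding_sum_in_rel_interior_Theta by blast
  show "?h \<notin> Theta_in"
    by (rule entropy_vector_uniform_avoiding_sum_notin_Theta_in)
qed

end
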